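(* Let $\beta:\mathbb{Z}\to\mathbb{C}$ have convergent increments and let $D_\beta:\mathcal{D}\to\mathcal{H}$ be $$D_\beta f=U\beta(\mathbb{K})f-f\beta(-\mathbb{K})U=\sum_{n\in\mathbb{Z}}U^{n+1}\big(\beta(\mathbb{K}+n)f_n(\mathbb{K})-\beta(-\mathbb{K}-1)f_n(\mathbb{K}+1)\big).$$ Let $m^2$ be a positive number. Then for all $f\in\mathcal{H}^+$, $$\langle \Theta f,\big(D_\beta^*D_\beta+m^2\big)^{-1}f\rangle\ge0.$$
   Context: Let $\{E_k\}_{k\in\mathbb{Z}}$ be the canonical basis of $\ell^2(\mathbb{Z})$, $UE_k=E_{k+1}$, $\mathbb{K}E_k=kE_k$, and $a(\mathbb{K})E_k=a(k)E_k$ for $a:\mathbb{Z}\to\mathbb{C}$ (so $a(\mathbb{K})U=Ua(\mathbb{K}+1)$). A function $\beta$ has convergent increments if $k\mapsto\beta(k)-\beta(k-1)$ has finite limits as $k\to\pm\infty$. $\mathcal{H}$ is the Hilbert space of Hilbert–Schmidt operators on $\ell^2(\mathbb{Z})$ with $\langle f,g\rangle=\mathrm{tr}(f^*g)$; each $f\in\mathcal{H}$ is uniquely $f=\sum_nU^nf_n(\mathbb{K})$ with $\sum_{n,k}|f_n(k)|^2<\infty$. $\mathcal{D}\subset\mathcal{H}$ is the dense subspace of finite sums $\sum_nU^nf_n(\mathbb{K})$ with each $f_n$ finitely supported. $\Theta f=\sum_nU^nf_n(-\mathbb{K}-n)$, and $\mathcal{H}^+=\{f\in\mathcal{H}:f_n(k)=0\text{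 whenever }n+2k<0\}$. $D_\beta^*D_\beta$ denotes the nonnegative self-adjoint operator $\overline{D_\beta}^{\,*}\,\overline{D_\beta}$, where $\overline{D_\beta}$ is the closure of the densely defined operator $D_\beta$. *)

theory Defs
  imports "HOL-Analysis.Analysis"
begin

text \<open>An element f of the Hilbert-Schmidt space is represented by its coefficient
  function (n,k) \<mapsto> f_n(k), where f = \<Sum>_n U^n f_n(K).  The trace inner product
  tr(f^* g) becomes \<Sum>_{n,k} conj(f_n k) g_n k.\<close>

type_synonym hs = "int \<times> int \<Rightarrow> complex"

definition HS :: "hs \<Rightarrow> bool" where
  "HS f \<longleftrightarrow> (\<lambda>p. (cmod (f p))\<^sup>2) summable_on UNIV"

definition hs_inner :: "hs \<Rightarrow> hs \<Rightarrow> complex" where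
  "hs_inner f g = (\<Sum>\<^sub>\<infinity>p. cnj (f p) * g p)"

definition hs_norm :: "hs \<Rightarrow> real" where
  "hs_norm f = sqrt (\<Sum>\<^sub>\<infinity>p. (cmod (f p))\<^sup>2)"

definition in_D :: "hs \<Rightarrow> bool" where
  "in_D f \<longleftrightarrow> finite {p. f p \<noteq> 0}"

definition convergent_increments :: "(int \<Rightarrow> complex) \<Rightarrow> bool" where
  "convergent_increments \<beta> \<longleftrightarrow>
     (\<exists>L. ((\<lambda>k. \<beta> k - \<beta> (k - 1)) \<longlongrightarrow> L) at_top) \<and>
     (\<exists>L. ((\<lambda>k. \<beta> k - \<beta> (k - 1)) \<longlongrightarrow> L) at_bot)"

text \<open>D_beta f = \<Sum>_n U^{n+1}(\<beta>(K+n) f_n(K) - \<beta>(-K-1) f_n(K+1)), in coefficients.\<close>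
definition Dop :: "(int \<Rightarrow> complex) \<Rightarrow> hs \<Rightarrow> hs" where
  "Dop \<beta> f = (\<lambda>(n, k). \<beta> (k + n - 1) * f (n - 1, k) - \<beta> (- k - 1) * f (n - 1, k + 1))"

text \<open>Theta f = \<Sum>_n U^n f_n(-K-n).\<close>
definition Theta :: "hs \<Rightarrow> hs" where
  "Theta f = (\<lambda>(n, k). f (n, - k - n))"

definition in_Hplus :: "hs \<Rightarrow> bool" where
  "in_Hplus f \<longleftrightarrow> HS f \<and> (\<forall>n k. n + 2 * k < 0 \<longrightarrow> f (n, k) = 0)"

definition closD :: "(int \<Rightarrow> complex) \<Rightarrow> hs \<Rightarrow> hs \<Rightarrow> bool" where
  "closD \<beta> g h \<longleftrightarrow> HS g \<and> HS h \<and>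
     (\<exists>\<phi> :: nat \<Rightarrow> hs. (\<forall>j. in_D (\<phi> j)) \<and>
        (\<lambda>j. hs_norm (\<phi> j - g)) \<longlonglongrightarrow> 0 \<and>
        (\<lambda>j. hs_norm (Dop \<beta> (\<phi> j) - h)) \<longlonglongrightarrow> 0)"

definition adjD :: "(int \<Rightarrow> complex) \<Rightarrow> hs \<Rightarrow> hs \<Rightarrow> bool" where
  "adjD \<beta> u v \<longleftrightarrow> HS u \<and> HS v \<and>
     (\<forall>g h. closD \<beta> g h \<longrightarrow> hs_inner h u = hs_inner g v)"

definition DstarD :: "(int \<Rightarrow> complex) \<Rightarrow> hs \<Rightarrow> hs \<Rightarrow> bool" where
  "DstarD \<beta> g w \<longleftrightarrow> (\<exists>h. closD \<beta> g h \<and> adjD \<beta> h w)"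

definition is_resolvent :: "(int \<Rightarrow> complex) \<Rightarrow> real \<Rightarrow> hs \<Rightarrow> hs \<Rightarrow> bool" where
  "is_resolvent \<beta> m2 f g \<longleftrightarrow>
     (\<exists>w. DstarD \<beta> g w \<and> (\<forall>p. w p + complex_of_real m2 * g p = f p))"

end

theory Submission
  imports Defs
begin

(* The operator D_beta^* D_beta + m^2 is invertible for the closure of any densely defined
   operator (von Neumann): the resolvent g = (D^* D + m^2)^-1 f is characterised weakly by the
   closed graph G of D_beta, and it exists by orthogonal projection onto a rescaled copy of G in
   H x H.  Nothing in the argument uses the convergent increments of beta.

   Theta is an involution with Theta D_beta Theta = - D_beta, so the resolvent commutes with
   Theta, and <Theta f, g> = E(f_even) - E(f_odd), where E(u) = ||D g_u||^2 + m^2 ||g_u||^2 is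
   the energy of the resolvent of u.  Multiplying by the sign of n + 2k maps Theta-odd vectors
   of G to Theta-even ones without increasing norms, and for f in H^+ it turns <g_odd, f_odd>
   into <sign * g_odd, f_even>.  Testing the variational characterisation of E(f_even) with this
   vector gives E(f_odd) <= E(f_even). *)

section \<open>Square-summable functions\<close>

definition square_summable :: "('a \<Rightarrow> complex) \<Rightarrow> bool" where
  "square_summable f \<longleftrightarrow> (\<lambda>x. (cmod (f x))\<^sup>2) summable_on UNIV"

lemma HS_eq_square_summable: "HS = square_summable"
  by (simp add: fun_eq_iff HS_def square_summable_def)

lemma square_summable_0 [simp]: "square_summable (\<lambda>_. 0)"
  by (simp add: square_summable_def)

lemma square_summable_bounded_mult:
  assumes "square_summable f" and "\<And>x. cmod (s x) \<le> C"
  shows "square_summable (\<lambda>x. s x * f x)"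
  unfolding square_summable_def
proof (rule summable_on_comparison_test)
  show "(\<lambda>x. C\<^sup>2 * (cmod (f x))\<^sup>2) summable_on UNIV"
    using assms(1) by (simp add: square_summable_def summable_on_cmult_right)
  show "(cmod (s x * f x))\<^sup>2 \<le> C\<^sup>2 * (cmod (f x))\<^sup>2" for x
    using assms(2)[of x] by (simp add: norm_mult power_mult_distrib mult_right_mono power_mono)
qed simp

lemma square_summable_scale: "square_summable f \<Longrightarrow> square_summable (\<lambda>x. c * f x)"
  using square_summable_bounded_mult[of f "\<lambda>_. c" "cmod c"] by simp

lemma square_summable_add:
  assumes "square_summable f" "square_summable g"
  shows "square_summable (\<lambda>x. f x + g x)"
  unfolding square_summable_def
proof (rule summable_on_comparison_test)
  show "(\<lambda>x. 2 * (cmod (f x))\<^sup>2 + 2 * (cmod (g x))\<^sup>2) summable_on UNIV"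
    using assms by (auto simp: square_summable_def intro!: summable_on_add summable_on_cmult_right)
  have "(cmod (a + b))\<^sup>2 \<le> 2 * (cmod a)\<^sup>2 + 2 * (cmod b)\<^sup>2" for a b :: complex
  proof -
    have "(cmod (a + b))\<^sup>2 \<le> (cmod a + cmod b)\<^sup>2"
      by (simp add: norm_triangle_ineq power_mono)
    also have "\<dots> \<le> 2 * (cmod a)\<^sup>2 + 2 * (cmod b)\<^sup>2"
      using sum_squares_bound[of "cmod a" "cmod b"] by (simp add: power2_sum)
    finally show ?thesis .
  qed
  then show "(cmod (f x + g x))\<^sup>2 \<le> 2 * (cmod (f x))\<^sup>2 + 2 * (cmod (g x))\<^sup>2" for x .
qed simp

lemma square_summable_diff:
  "square_summable f \<Longrightarrow> square_summable g \<Longrightarrow> square_summable (\<lambda>x. f x - g x)"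
  using square_summable_add[of f "\<lambda>x. - 1 * g x"] square_summable_scale[of g "- 1"] by simp

lemma square_summable_finite_support: "finite {x. f x \<noteq> 0} \<Longrightarrow> square_summable f"
  unfolding square_summable_def
  by (rule finite_nonzero_values_imp_summable_on) (auto elim: finite_subset[rotated])

lemma summable_on_cnj_mult:
  assumes "square_summable f" "square_summable g"
  shows "(\<lambda>x. cnj (f x) * g x) summable_on UNIV"
proof (rule abs_summable_summable, rule summable_on_comparison_test)
  show "(\<lambda>x. (cmod (f x))\<^sup>2 + (cmod (g x))\<^sup>2) summable_on UNIV"
    using assms by (auto simp: square_summable_def intro: summable_on_add)
  show "norm (cnj (f x) * g x) \<le> (cmod (f x))\<^sup>2 + (cmod (g x))\<^sup>2" for x
  proof -
    have "cmod (f x) * cmod (g x) \<le> 2 * cmod (f x) * cmod (g x)"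
      by simp
    also have "\<dots> \<le> (cmod (f x))\<^sup>2 + (cmod (g x))\<^sup>2"
      by (rule sum_squares_bound)
    finally show ?thesis
      by (simp add: norm_mult)
  qed
qed simp

typedef 'a ell2 = "{f :: 'a \<Rightarrow> complex. square_summable f}"
  by (rule exI[of _ "\<lambda>_. 0"]) simp

lemma square_summable_Rep_ell2 [simp]: "square_summable (Rep_ell2 a)"
  using Rep_ell2 by simp

lemma Rep_ell2_Abs_ell2 [simp]: "square_summable f \<Longrightarrow> Rep_ell2 (Abs_ell2 f) = f"
  by (simp add: Abs_ell2_inverse)

lemma ell2_eqI: "(\<And>x. Rep_ell2 a x = Rep_ell2 b x) \<Longrightarrow> a = b"
  by (metis Rep_ell2_inject ext)

instantiation ell2 :: (type) real_vector
begin
definition "0 = Abs_ell2 (\<lambda>_. 0)"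
definition "a + b = Abs_ell2 (\<lambda>x. Rep_ell2 a x + Rep_ell2 b x)"
definition "a - b = Abs_ell2 (\<lambda>x. Rep_ell2 a x - Rep_ell2 b x)"
definition "- a = Abs_ell2 (\<lambda>x. - Rep_ell2 a x)"
definition "r *\<^sub>R a = Abs_ell2 (\<lambda>x. complex_of_real r * Rep_ell2 a x)"

lemma Rep_ell2_zero [simp]: "Rep_ell2 0 = (\<lambda>_. 0)"
  by (simp add: zero_ell2_def)

lemma Rep_ell2_add [simp]: "Rep_ell2 (a + b) = (\<lambda>x. Rep_ell2 a x + Rep_ell2 b x)"
  by (simp add: plus_ell2_def square_summable_add)

lemma Rep_ell2_diff [simp]: "Rep_ell2 (a - b) = (\<lambda>x. Rep_ell2 a x - Rep_ell2 b x)"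
  by (simp add: minus_ell2_def square_summable_diff)

lemma Rep_ell2_uminus [simp]: "Rep_ell2 (- a) = (\<lambda>x. - Rep_ell2 a x)"
  using square_summable_scale[of "Rep_ell2 a" "- 1"] by (simp add: uminus_ell2_def)

lemma Rep_ell2_scaleR [simp]: "Rep_ell2 (r *\<^sub>R a) = (\<lambda>x. complex_of_real r * Rep_ell2 a x)"
  by (simp add: scaleR_ell2_def square_summable_scale)

instance
  by standard (rule ell2_eqI; simp add: algebra_simps)+
end

lemma Abs_ell2_add:
  "square_summable f \<Longrightarrow> square_summable g \<Longrightarrow> Abs_ell2 f + Abs_ell2 g = Abs_ell2 (\<lambda>x. f x + g x)"
  by (rule ell2_eqI) (simp add: square_summable_add)

lemma Abs_ell2_scaleR:
  "square_summable f \<Longrightarrow> r *\<^sub>R Abs_ell2 f = Abs_ell2 (\<lambda>x. complex_of_real r * f x)"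
  by (rule ell2_eqI) (simp add: square_summable_scale)

definition cinner :: "'a ell2 \<Rightarrow> 'a ell2 \<Rightarrow> complex" where
  "cinner a b = (\<Sum>\<^sub>\<infinity>x. cnj (Rep_ell2 a x) * Rep_ell2 b x)"

lemma cinner_add_left: "cinner (a + b) c = cinner a c + cinner b c"
  unfolding cinner_def
  by (simp add: distrib_right infsum_add summable_on_cnj_mult)

lemma cinner_add_right: "cinner a (b + c) = cinner a b + cinner a c"
  unfolding cinner_def
  by (simp add: distrib_left infsum_add summable_on_cnj_mult)

lemma cinner_commute: "cinner b a = cnj (cinner a b)"
  unfolding cinner_def infsum_cnj[symmetric] by (simp add: mult.commute)

lemma cinner_scaleR_left: "cinner (r *\<^sub>R a) b = of_real r * cinner a b"
  unfolding cinner_def by (subst infsum_cmult_right'[symmetric]) (simp add: algebra_simps)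

lemma cinner_scaleR_right: "cinner a (r *\<^sub>R b) = of_real r * cinner a b"
  unfolding cinner_def by (subst infsum_cmult_right'[symmetric]) (simp add: algebra_simps)

lemma cinner_minus_left: "cinner (- a) b = - cinner a b"
  using cinner_scaleR_left[of "- 1" a b] by simp

lemma cinner_minus_right: "cinner a (- b) = - cinner a b"
  using cinner_scaleR_right[of a "- 1" b] by simp

lemma cinner_diff_left: "cinner (a - b) c = cinner a c - cinner b c"
  using cinner_add_left[of a "- b" c] by (simp add: cinner_minus_left)

lemma cinner_diff_right: "cinner a (b - c) = cinner a b - cinner a c"
  using cinner_add_right[of a b "- c"] by (simp add: cinner_minus_right)

lemma cinner_self: "cinner a a = of_real (\<Sum>\<^sub>\<infinity>x. (cmod (Rep_ell2 a x))\<^sup>2)"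
proof -
  have "cinner a a = (\<Sum>\<^sub>\<infinity>x. of_real ((cmod (Rep_ell2 a x))\<^sup>2))"
    unfolding cinner_def by (intro infsum_cong) (metis complex_norm_square mult.commute of_real_power)
  also have "\<dots> = of_real (\<Sum>\<^sub>\<infinity>x. (cmod (Rep_ell2 a x))\<^sup>2)"
    using square_summable_Rep_ell2[of a] unfolding square_summable_def
    by (intro infsumI has_sum_of_real has_sum_infsum)
  finally show ?thesis .
qed

instantiation ell2 :: (type) real_inner
begin
definition "inner a b = Re (cinner a b)"
definition "norm a = sqrt (\<Sum>\<^sub>\<infinity>x. (cmod (Rep_ell2 a x))\<^sup>2)"
definition "dist a b = norm (a - b)" for a b :: "'a ell2"
definition "sgn a = a /\<^sub>R norm a" for a :: "'a ell2"
definition "uniformity = (INF e\<in>{0<..}. principal {(a, b :: 'a ell2). dist a b < e})"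
definition "open S = (\<forall>a\<in>S. \<forall>\<^sub>F (a', b) in uniformity. a' = a \<longrightarrow> b \<in> S)"
  for S :: "'a ell2 set"

instance
proof
  fix a b c :: "'a ell2" and r :: real
  show "inner a b = inner b a"
    by (simp add: inner_ell2_def cinner_commute[of a])
  show "inner (a + b) c = inner a c + inner b c"
    by (simp add: inner_ell2_def cinner_add_left)
  show "inner (r *\<^sub>R a) b = r * inner a b"
    by (simp add: inner_ell2_def cinner_scaleR_left)
  show "0 \<le> inner a a"
    by (simp add: inner_ell2_def cinner_self infsum_nonneg)
  show "norm a = sqrt (inner a a)"
    by (simp add: inner_ell2_def cinner_self norm_ell2_def)
  show "inner a a = 0 \<longleftrightarrow> a = 0"
  proof
    assume "inner a a = 0"
    then have sum_zero: "(\<Sum>\<^sub>\<infinity>x. (cmod (Rep_ell2 a x))\<^sup>2) = 0"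
      by (simp add: inner_ell2_def cinner_self)
    have "(cmod (Rep_ell2 a x))\<^sup>2 = 0" for x
      using square_summable_Rep_ell2[of a] sum_zero unfolding square_summable_def
      by (intro nonneg_infsum_le_0D[where A = UNIV]) auto
    then show "a = 0"
      by (intro ell2_eqI) simp
  qed (simp add: inner_ell2_def cinner_def)
next
  show "dist a b = norm (a - b)" for a b :: "'a ell2"
    by (simp add: dist_ell2_def)
  show "sgn a = a /\<^sub>R norm a" for a :: "'a ell2"
    by (simp add: sgn_ell2_def)
  show "(uniformity :: ('a ell2 \<times> 'a ell2) filter) = (INF e\<in>{0<..}. principal {(a, b). dist a b < e})"
    by (simp add: uniformity_ell2_def)
  show "open S = (\<forall>a\<in>S. \<forall>\<^sub>F (a', b) in uniformity. a' = a \<longrightarrow> b \<in> S)" for S :: "'a ell2 set"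
    by (simp add: open_ell2_def)
qed
end

lemma norm_ell2_square: "(norm a)\<^sup>2 = (\<Sum>\<^sub>\<infinity>x. (cmod (Rep_ell2 a x))\<^sup>2)"
  by (simp add: norm_ell2_def infsum_nonneg)

lemma cinner_self_norm: "cinner a a = of_real ((norm a)\<^sup>2)"
  by (simp add: cinner_self norm_ell2_def infsum_nonneg)

lemma Re_cinner: "Re (cinner a b) = inner a b"
  by (simp add: inner_ell2_def)

lemma finite_sum_le_norm_square:
  "finite F \<Longrightarrow> (\<Sum>x\<in>F. (cmod (Rep_ell2 a x))\<^sup>2) \<le> (norm a)\<^sup>2"
  using finite_sum_le_infsum[of "\<lambda>x. (cmod (Rep_ell2 a x))\<^sup>2" UNIV F] square_summable_Rep_ell2[of a]
  by (simp add: norm_ell2_def infsum_nonneg square_summable_def)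

lemma norm_Rep_ell2_le: "cmod (Rep_ell2 a x) \<le> norm a"
  using finite_sum_le_norm_square[of "{x}" a] by (simp add: power2_le_iff_abs_le)

lemma square_summable_pointwise_limit:
  assumes lim: "\<And>x. (\<lambda>n. Rep_ell2 (X n) x) \<longlonglongrightarrow> L x"
    and bound: "\<forall>\<^sub>F n in sequentially. norm (a - X n) \<le> e"
  shows "square_summable (\<lambda>x. Rep_ell2 a x - L x)"
    and "(\<Sum>\<^sub>\<infinity>x. (cmod (Rep_ell2 a x - L x))\<^sup>2) \<le> e\<^sup>2"
proof -
  have finite_sums: "(\<Sum>x\<in>F. (cmod (Rep_ell2 a x - L x))\<^sup>2) \<le> e\<^sup>2" if "finite F" for F
  proof (rule tendsto_upperbound)
    show "(\<lambda>n. \<Sum>x\<in>F. (cmod (Rep_ell2 a x - Rep_ell2 (X n) x))\<^sup>2)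
            \<longlonglongrightarrow> (\<Sum>x\<in>F. (cmod (Rep_ell2 a x - L x))\<^sup>2)"
      by (intro tendsto_intros lim)
    show "\<forall>\<^sub>F n in sequentially. (\<Sum>x\<in>F. (cmod (Rep_ell2 a x - Rep_ell2 (X n) x))\<^sup>2) \<le> e\<^sup>2"
      using bound
    proof eventually_elim
      case (elim n)
      have "(\<Sum>x\<in>F. (cmod (Rep_ell2 (a - X n) x))\<^sup>2) \<le> (norm (a - X n))\<^sup>2"
        using \<open>finite F\<close> by (rule finite_sum_le_norm_square)
      also have "\<dots> \<le> e\<^sup>2"
        using elim by (simp add: power_mono)
      finally show ?case
        by simp
    qed
  qed simp
  show summable: "square_summable (\<lambda>x. Rep_ell2 a x - L x)"
    unfolding square_summable_def
    by (rule nonneg_bdd_above_summable_on) (auto intro!: bdd_aboveI2 finite_sums)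
  show "(\<Sum>\<^sub>\<infinity>x. (cmod (Rep_ell2 a x - L x))\<^sup>2) \<le> e\<^sup>2"
    using summable finite_sums unfolding square_summable_def
    by (intro infsum_le_finite_sums) auto
qed

lemma Cauchy_Rep_ell2:
  assumes "Cauchy X"
  shows "Cauchy (\<lambda>n. Rep_ell2 (X n) x)"
proof (rule CauchyI)
  fix e :: real
  assume "e > 0"
  then obtain M where M: "\<forall>m\<ge>M. \<forall>n\<ge>M. norm (X m - X n) < e"
    using CauchyD[OF \<open>Cauchy X\<close>] by blast
  have "norm (Rep_ell2 (X m) x - Rep_ell2 (X n) x) < e" if "m \<ge> M" "n \<ge> M" for m n
    using norm_Rep_ell2_le[of "X m - X n" x] M that by fastforce
  then show "\<exists>M. \<forall>m\<ge>M. \<forall>n\<ge>M. norm (Rep_ell2 (X m) x - Rep_ell2 (X n) x) < e"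
    by blast
qed

lemma Cauchy_ell2_tendsto_pointwise_limit:
  assumes "Cauchy X" and lim: "\<And>x. (\<lambda>n. Rep_ell2 (X n) x) \<longlonglongrightarrow> L x"
  shows "square_summable L" and "X \<longlonglongrightarrow> Abs_ell2 L"
proof -
  have close: "\<exists>N. \<forall>m\<ge>N. \<forall>\<^sub>F n in sequentially. norm (X m - X n) \<le> e" if "e > 0" for e
  proof -
    obtain N where "\<forall>m\<ge>N. \<forall>n\<ge>N. norm (X m - X n) < e"
      using CauchyD[OF \<open>Cauchy X\<close> \<open>e > 0\<close>] by blast
    then show ?thesis
      by (auto intro!: eventually_sequentiallyI less_imp_le)
  qed
  obtain N\<^sub>1 where "\<forall>\<^sub>F n in sequentially. norm (X N\<^sub>1 - X n) \<le> 1"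
    using close[of 1] by auto
  then have "square_summable (\<lambda>x. Rep_ell2 (X N\<^sub>1) x - (Rep_ell2 (X N\<^sub>1) x - L x))"
    by (intro square_summable_diff square_summable_Rep_ell2 square_summable_pointwise_limit(1)[of X L, OF lim])
  then show "square_summable L"
    by simp
  show "X \<longlonglongrightarrow> Abs_ell2 L"
  proof (rule LIMSEQ_I)
    fix r :: real
    assume "r > 0"
    then obtain N where N: "\<And>m. m \<ge> N \<Longrightarrow> \<forall>\<^sub>F n in sequentially. norm (X m - X n) \<le> r / 2"
      using close[of "r / 2"] by auto
    have "norm (X m - Abs_ell2 L) < r" if "m \<ge> N" for m
    proof -
      have "(norm (X m - Abs_ell2 L))\<^sup>2 = (\<Sum>\<^sub>\<infinity>x. (cmod (Rep_ell2 (X m) x - L x))\<^sup>2)"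
        using \<open>square_summable L\<close> by (simp add: norm_ell2_square)
      also have "\<dots> \<le> (r / 2)\<^sup>2"
        using lim N[OF that] by (rule square_summable_pointwise_limit(2))
      finally have "norm (X m - Abs_ell2 L) \<le> r / 2"
        by (rule power2_le_imp_le) (use \<open>r > 0\<close> in simp)
      then show ?thesis
        using \<open>r > 0\<close> by simp
    qed
    then show "\<exists>N. \<forall>m\<ge>N. norm (X m - Abs_ell2 L) < r"
      by blast
  qed
qed

instance ell2 :: (type) complete_space
proof
  fix X :: "nat \<Rightarrow> 'a ell2"
  assume "Cauchy X"
  define L where "L x = lim (\<lambda>n. Rep_ell2 (X n) x)" for x
  have "(\<lambda>n. Rep_ell2 (X n) x) \<longlonglongrightarrow> L x" for x
    unfolding L_def
    by (rule convergent_LIMSEQ_iff[THEN iffD1, OF Cauchy_convergent[OF Cauchy_Rep_ell2[OF \<open>Cauchy X\<close>]]])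
  then show "convergent X"
    using Cauchy_ell2_tendsto_pointwise_limit(2)[OF \<open>Cauchy X\<close>] by (auto simp: convergent_def)
qed

definition cscale :: "complex \<Rightarrow> 'a ell2 \<Rightarrow> 'a ell2" where
  "cscale c a = Abs_ell2 (\<lambda>x. c * Rep_ell2 a x)"

lemma Rep_ell2_cscale [simp]: "Rep_ell2 (cscale c a) = (\<lambda>x. c * Rep_ell2 a x)"
  by (simp add: cscale_def square_summable_scale)

lemma cinner_cscale_left: "cinner (cscale c a) b = cnj c * cinner a b"
  unfolding cinner_def by (subst infsum_cmult_right'[symmetric]) (simp add: algebra_simps)

lemma Re_cinner_cscale_i: "Re (cinner (cscale \<i> a) b) = Im (cinner a b)"
  by (simp add: cinner_cscale_left)

lemma norm_cscale: "norm (cscale c a) = cmod c * norm a"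
proof -
  have "(norm (cscale c a))\<^sup>2 = (\<Sum>\<^sub>\<infinity>x. (cmod c)\<^sup>2 * (cmod (Rep_ell2 a x))\<^sup>2)"
    by (simp add: norm_ell2_square norm_mult power_mult_distrib)
  also have "\<dots> = (cmod c * norm a)\<^sup>2"
    by (simp add: infsum_cmult_right' norm_ell2_square power_mult_distrib)
  finally show ?thesis
    by (simp add: power2_eq_iff_nonneg)
qed

lemma bounded_linear_cscale: "bounded_linear (cscale c)"
  by (rule bounded_linear_intro[where K = "cmod c"])
     (auto intro!: ell2_eqI simp: norm_cscale algebra_simps)

section \<open>Nearest points and closed subspaces\<close>

lemma Cauchy_if_minimizing_in_convex:
  fixes Y :: "nat \<Rightarrow> 'a::real_inner"
  assumes "convex S" and Y: "\<And>n. Y n \<in> S"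
    and lower: "\<And>y. y \<in> S \<Longrightarrow> d \<le> (norm (z - y))\<^sup>2"
    and minimizing: "\<And>n. (norm (z - Y n))\<^sup>2 < d + 1 / Suc n"
  shows "Cauchy Y"
proof (rule CauchyI)
  \<comment> \<open>parallelogram law, with the midpoint of Y m and Y n in S\<close>
  have Y_close: "(norm (Y m - Y n))\<^sup>2 \<le> 2 / Suc m + 2 / Suc n" for m n
  proof -
    have "(norm ((z - Y m) + (z - Y n)))\<^sup>2 + (norm ((z - Y m) - (z - Y n)))\<^sup>2
          = 2 * (norm (z - Y m))\<^sup>2 + 2 * (norm (z - Y n))\<^sup>2"
      by (simp add: power2_norm_eq_inner inner_add inner_diff inner_commute)
    moreover have "(z - Y m) + (z - Y n) = 2 *\<^sub>R (z - ((1/2) *\<^sub>R Y m + (1/2) *\<^sub>R Y n))"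
      by (simp add: algebra_simps scaleR_2)
    moreover have "d \<le> (norm (z - ((1/2) *\<^sub>R Y m + (1/2) *\<^sub>R Y n)))\<^sup>2"
      using Y \<open>convex S\<close> by (intro lower) (simp add: convexD)
    ultimately show ?thesis
      using minimizing[of m] minimizing[of n] by (simp add: power2_eq_square norm_minus_commute[of "Y n"])
  qed
  fix e :: real
  assume "e > 0"
  obtain N where N: "4 / e\<^sup>2 < real N"
    using reals_Archimedean2 by blast
  then have "4 / Suc N < e\<^sup>2"
    using \<open>e > 0\<close> by (simp add: field_simps) (smt (verit) mult_strict_left_mono zero_less_power)
  moreover have "2 / Suc m + 2 / Suc n \<le> 4 / Suc N" if "m \<ge> N" "n \<ge> N" for m n
    using frac_le[of 2 2 "Suc N" "Suc m"] frac_le[of 2 2 "Suc N" "Suc n"] that by simp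
  ultimately have "(norm (Y m - Y n))\<^sup>2 < e\<^sup>2" if "m \<ge> N" "n \<ge> N" for m n
    using Y_close[of m n] that by fastforce
  then show "\<exists>M. \<forall>m\<ge>M. \<forall>n\<ge>M. norm (Y m - Y n) < e"
    using \<open>e > 0\<close> by (meson power_less_imp_less_base less_imp_le)
qed

lemma closest_point_exists_complete:
  fixes S :: "'a::{real_inner,complete_space} set"
  assumes "closed S" and "convex S" and "S \<noteq> {}"
  shows "\<exists>x\<in>S. \<forall>y\<in>S. norm (z - x) \<le> norm (z - y)"
proof -
  define d where "d = Inf ((\<lambda>y. (norm (z - y))\<^sup>2) ` S)"
  have d_le: "d \<le> (norm (z - y))\<^sup>2" if "y \<in> S" for y
    unfolding d_def by (rule cInf_lower) (use that in \<open>auto intro: bdd_belowI2[where m = 0]\<close>)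
  have "\<exists>y\<in>S. (norm (z - y))\<^sup>2 < d + 1 / Suc n" for n
    using cInf_lessD[of "(\<lambda>y. (norm (z - y))\<^sup>2) ` S" "d + 1 / Suc n"] \<open>S \<noteq> {}\<close>
    by (auto simp: d_def)
  then obtain Y where Y: "\<And>n. Y n \<in> S" "\<And>n. (norm (z - Y n))\<^sup>2 < d + 1 / Suc n"
    by metis
  then have "Cauchy Y"
    using \<open>convex S\<close> d_le by (intro Cauchy_if_minimizing_in_convex)
  then obtain x where x: "Y \<longlonglongrightarrow> x"
    using Cauchy_convergent convergent_def by blast
  have "x \<in> S"
    using closed_sequentially[OF \<open>closed S\<close>] Y(1) x by blast
  have "(norm (z - x))\<^sup>2 \<le> d"
  proof (rule LIMSEQ_le)
    show "(\<lambda>n. (norm (z - Y n))\<^sup>2) \<longlonglongrightarrow> (norm (z - x))\<^sup>2"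
      by (intro tendsto_intros x)
    show "(\<lambda>n. d + 1 / Suc n) \<longlonglongrightarrow> d"
      using tendsto_add[OF tendsto_const[of d] LIMSEQ_inverse_real_of_nat]
      by (simp add: inverse_eq_divide)
    show "\<exists>N. \<forall>n\<ge>N. (norm (z - Y n))\<^sup>2 \<le> d + 1 / Suc n"
      using Y(2) less_imp_le by blast
  qed
  then have "norm (z - x) \<le> norm (z - y)" if "y \<in> S" for y
    using d_le[OF that] by (simp add: power2_le_imp_le)
  with \<open>x \<in> S\<close> show ?thesis
    by blast
qed

lemma orthogonal_projection_exists:
  fixes S :: "'a::{real_inner,complete_space} set"
  assumes "closed S" and "subspace S"
  shows "\<exists>x\<in>S. \<forall>y\<in>S. inner (z - x) y = 0"
proof -
  obtain x where "x \<in> S" and nearest: "\<And>y. y \<in> S \<Longrightarrow> norm (z - x) \<le> norm (z - y)"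
    using closest_point_exists_complete[OF \<open>closed S\<close> subspace_imp_convex[OF \<open>subspace S\<close>]]
      subspace_0[OF \<open>subspace S\<close>] by blast
  have "inner (z - x) y = 0" if "y \<in> S" and "y \<noteq> 0" for y
  proof -
    define w where "w = z - x"
    define a where "a = inner w y"
    define t where "t = a / (norm y)\<^sup>2"
    have "x + t *\<^sub>R y \<in> S"
      using \<open>x \<in> S\<close> \<open>y \<in> S\<close> \<open>subspace S\<close> by (simp add: subspace_add subspace_scale)
    then have "(norm w)\<^sup>2 \<le> (norm (w - t *\<^sub>R y))\<^sup>2"
      using nearest by (simp add: w_def diff_diff_eq power_mono)
    also have "\<dots> = (norm w)\<^sup>2 - 2 * t * a + t\<^sup>2 * (norm y)\<^sup>2"
      unfolding power2_norm_eq_inner a_def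
      by (simp add: inner_diff inner_commute power2_eq_square algebra_simps)
    also have "\<dots> = (norm w)\<^sup>2 - a\<^sup>2 / (norm y)\<^sup>2"
      using \<open>y \<noteq> 0\<close> by (simp add: t_def power2_eq_square field_simps)
    finally have "a\<^sup>2 / (norm y)\<^sup>2 \<le> 0"
      by simp
    then show ?thesis
      using \<open>y \<noteq> 0\<close> by (simp add: a_def w_def divide_le_0_iff)
  qed
  with \<open>x \<in> S\<close> show ?thesis
    by (metis inner_zero_right)
qed

lemma closure_image_subset_bounded_linear:
  assumes "bounded_linear f" and "f ` S \<subseteq> T"
  shows "f ` closure S \<subseteq> closure T"
  using closure_bounded_linear_image_subset[OF assms(1)] closure_mono[OF assms(2)] by blast

lemma bounded_linear_map_prod:
  "bounded_linear f \<Longrightarrow> bounded_linear g \<Longrightarrow> bounded_linear (map_prod f g)"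
  using bounded_linear_Pair[OF bounded_linear_compose[OF _ bounded_linear_fst]
      bounded_linear_compose[OF _ bounded_linear_snd], of f g]
  by (simp add: map_prod_def case_prod_beta')

lemma subspace_closure:
  fixes S :: "'a::real_normed_vector set"
  assumes "subspace S"
  shows "subspace (closure S)"
  unfolding subspace_def
proof (intro conjI ballI allI)
  show "0 \<in> closure S"
    using subspace_0[OF assms] closure_subset by blast
  fix x y
  assume "x \<in> closure S" "y \<in> closure S"
  then have xy: "(x, y) \<in> closure (S \<times> S)"
    by (simp add: closure_Times)
  have "(\<lambda>p. fst p + snd p) ` closure (S \<times> S) \<subseteq> closure S"
  proof (rule closure_image_subset_bounded_linear)
    show "bounded_linear (\<lambda>p :: 'a \<times> 'a. fst p + snd p)"
      using bounded_linear_add[OF bounded_linear_fst bounded_linear_snd] .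
    show "(\<lambda>p. fst p + snd p) ` (S \<times> S) \<subseteq> S"
      by (clarsimp simp: subspace_add[OF assms])
  qed
  then have "fst (x, y) + snd (x, y) \<in> closure S"
    unfolding image_subset_iff using xy by (rule bspec)
  then show "x + y \<in> closure S"
    by simp
next
  fix c and x :: 'a
  assume "x \<in> closure S"
  moreover have "scaleR c ` closure S \<subseteq> closure S"
    by (rule closure_image_subset_bounded_linear[OF bounded_linear_scaleR_right])
       (clarsimp simp: subspace_scale[OF assms])
  ultimately show "c *\<^sub>R x \<in> closure S"
    by blast
qed

section \<open>Weak resolvents of closed linear relations\<close>

text \<open>With \<open>G\<close> the graph of an operator \<open>T\<close>: \<open>h = T g\<close> and \<open>(T\<^sup>* T + m2) g = f\<close>,
  in weak form.\<close>

definition weak_resolvent ::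
    "('a ell2 \<times> 'a ell2) set \<Rightarrow> real \<Rightarrow> 'a ell2 \<Rightarrow> 'a ell2 \<Rightarrow> 'a ell2 \<Rightarrow> bool" where
  "weak_resolvent G m2 f g h \<longleftrightarrow> (g, h) \<in> G \<and>
     (\<forall>x y. (x, y) \<in> G \<longrightarrow> cinner x f = cinner y h + of_real m2 * cinner x g)"

lemma weak_resolvent_add:
  assumes "subspace G" and "weak_resolvent G m2 f g h" and "weak_resolvent G m2 f' g' h'"
  shows "weak_resolvent G m2 (f + f') (g + g') (h + h')"
  using assms(2,3) subspace_add[OF assms(1), of "(g, h)" "(g', h')"]
  unfolding weak_resolvent_def by (simp add: cinner_add_right algebra_simps)

lemma weak_resolvent_scaleR:
  assumes "subspace G" and "weak_resolvent G m2 f g h"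
  shows "weak_resolvent G m2 (r *\<^sub>R f) (r *\<^sub>R g) (r *\<^sub>R h)"
  using assms(2) subspace_scale[OF assms(1), of "(g, h)" r]
  unfolding weak_resolvent_def by (simp add: cinner_scaleR_right algebra_simps)

lemma weak_resolvent_diff:
  assumes "subspace G" and "weak_resolvent G m2 f g h" and "weak_resolvent G m2 f' g' h'"
  shows "weak_resolvent G m2 (f - f') (g - g') (h - h')"
  using weak_resolvent_add[OF assms(1,2) weak_resolvent_scaleR[OF assms(1,3), of "- 1"]] by simp

lemma weak_resolvent_energy:
  assumes "weak_resolvent G m2 f g h"
  shows "cinner g f = of_real ((norm h)\<^sup>2 + m2 * (norm g)\<^sup>2)"
proof -
  have "cinner g f = cinner h h + of_real m2 * cinner g g"
    using assms unfolding weak_resolvent_def by blast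
  then show ?thesis
    by (simp add: cinner_self_norm)
qed

lemma weak_resolvent_variational_bound:
  assumes "weak_resolvent G m2 f g h" and "(x, y) \<in> G" and "0 \<le> m2"
  shows "2 * Re (cinner x f) - (norm y)\<^sup>2 - m2 * (norm x)\<^sup>2 \<le> (norm h)\<^sup>2 + m2 * (norm g)\<^sup>2"
proof -
  have two_inner_le: "2 * inner u v \<le> (norm u)\<^sup>2 + (norm v)\<^sup>2" for u v :: "'a ell2"
    using norm_cauchy_schwarz[of u v] sum_squares_bound[of "norm u" "norm v"] by simp
  have "Re (cinner x f) = inner y h + m2 * inner x g"
    using assms(1,2) unfolding weak_resolvent_def by (simp add: Re_cinner)
  moreover have "m2 * (2 * inner x g) \<le> m2 * ((norm x)\<^sup>2 + (norm g)\<^sup>2)"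
    using \<open>0 \<le> m2\<close> two_inner_le by (rule mult_left_mono[rotated])
  ultimately show ?thesis
    using two_inner_le[of y h] by (simp add: algebra_simps)
qed

lemma weak_resolvent_unique:
  assumes "subspace G" and "0 < m2"
    and "weak_resolvent G m2 f g h" and "weak_resolvent G m2 f g' h'"
  shows "g = g'"
proof -
  have "weak_resolvent G m2 (f + (- 1) *\<^sub>R f) (g + (- 1) *\<^sub>R g') (h + (- 1) *\<^sub>R h')"
    using assms(1,3,4) by (intro weak_resolvent_add weak_resolvent_scaleR)
  then have "weak_resolvent G m2 0 (g - g') (h - h')"
    by simp
  then have "of_real ((norm (h - h'))\<^sup>2 + m2 * (norm (g - g'))\<^sup>2) = cinner (g - g') 0"
    by (rule weak_resolvent_energy[symmetric])
  also have "\<dots> = 0"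
    by (simp add: cinner_def)
  finally have "(norm (h - h'))\<^sup>2 + m2 * (norm (g - g'))\<^sup>2 = 0"
    by (simp only: of_real_eq_0_iff)
  then have "norm (g - g') = 0"
    using \<open>0 < m2\<close> by (simp add: add_nonneg_eq_0_iff)
  then show ?thesis
    by simp
qed

lemma weak_resolvent_exists:
  assumes "closed G" and "subspace G"
    and ii_closed: "\<And>x y. (x, y) \<in> G \<Longrightarrow> (cscale \<i> x, cscale \<i> y) \<in> G"
    and "0 < m2"
  shows "\<exists>g h. weak_resolvent G m2 f g h"
proof -
  define c where "c = sqrt m2"
  have "0 < c" and "c * c = m2"
    using \<open>0 < m2\<close> by (simp_all add: c_def)
  \<comment> \<open>rescale the graph so that the orthogonal projection of (f/c, 0) onto it solves the problem\<close>
  define S where "S = map_prod (scaleR (1 / c)) id -` G"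
  have S_iff: "(c *\<^sub>R x, y) \<in> S \<longleftrightarrow> (x, y) \<in> G" for x y
    using \<open>0 < c\<close> by (simp add: S_def)
  have "bounded_linear (map_prod (scaleR (1 / c)) (id :: 'a ell2 \<Rightarrow> 'a ell2))"
    by (intro bounded_linear_map_prod bounded_linear_scaleR_right bounded_linear_ident[folded id_def])
  then have "closed S" and "subspace S"
    unfolding S_def using \<open>closed G\<close> \<open>subspace G\<close>
    by (auto intro: closed_vimage linear_continuous_on real_vector.linear_subspace_vimage
        bounded_linear.linear)
  then obtain p where "p \<in> S" and orth: "\<And>q. q \<in> S \<Longrightarrow> inner (((1 / c) *\<^sub>R f, 0) - p) q = 0"
    using orthogonal_projection_exists by blast
  define g where "g = (1 / c) *\<^sub>R fst p"
  define h where "h = snd p"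
  have p: "p = (c *\<^sub>R g, h)"
    using \<open>0 < c\<close> by (simp add: g_def h_def)
  have "(g, h) \<in> G"
    using \<open>p \<in> S\<close> S_iff p by simp
  have real_part: "inner x f = inner y h + m2 * inner x g" if "(x, y) \<in> G" for x y
  proof -
    have "inner (((1 / c) *\<^sub>R f, 0) - p) (c *\<^sub>R x, y) = 0"
      using that S_iff by (intro orth) simp
    then show ?thesis
      using \<open>0 < c\<close> \<open>c * c = m2\<close> unfolding p
      by (simp add: inner_diff_left inner_commute algebra_simps)
  qed
  have "cinner x f = cinner y h + of_real m2 * cinner x g" if "(x, y) \<in> G" for x y
    using real_part[OF that] real_part[OF ii_closed[OF that]]
    by (simp add: complex_eq_iff Re_cinner_cscale_i flip: Re_cinner)
  with \<open>(g, h) \<in> G\<close> show ?thesis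
    unfolding weak_resolvent_def by blast
qed

section \<open>The involution Theta and the sign of n + 2k\<close>

definition Theta_index :: "int \<times> int \<Rightarrow> int \<times> int" where
  "Theta_index = (\<lambda>(n, k). (n, - k - n))"

lemma Theta_index_Theta_index [simp]: "Theta_index (Theta_index p) = p"
  by (cases p) (simp add: Theta_index_def)

lemma bij_betw_Theta_index: "bij_betw Theta_index UNIV UNIV"
  by (rule bij_betw_byWitness[where f' = Theta_index]) auto

lemma Theta_index_eq_self_iff: "Theta_index (n, k) = (n, k) \<longleftrightarrow> n + 2 * k = 0"
  by (auto simp: Theta_index_def)

lemma Theta_apply: "Theta f p = f (Theta_index p)"
  by (cases p) (simp add: Theta_def Theta_index_def)

lemma infsum_Theta_index: "(\<Sum>\<^sub>\<infinity>p. F (Theta_index p)) = (\<Sum>\<^sub>\<infinity>p. F p)"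
  using infsum_reindex_bij_betw[OF bij_betw_Theta_index, of F] .

lemma square_summable_Theta: "square_summable f \<Longrightarrow> square_summable (Theta f)"
  using summable_on_reindex_bij_betw[OF bij_betw_Theta_index, of "\<lambda>p. (cmod (f p))\<^sup>2"]
  by (simp add: square_summable_def Theta_apply)

lemma Theta_odd_vanishes:
  assumes "\<And>p. Theta f p = - f p" and "n + 2 * k = 0"
  shows "f (n, k) = 0"
proof -
  have "Theta_index (n, k) = (n, k)"
    using assms(2) by (simp add: Theta_index_eq_self_iff)
  then show ?thesis
    using assms(1)[of "(n, k)"] by (simp add: Theta_apply)
qed

definition theta :: "(int \<times> int) ell2 \<Rightarrow> (int \<times> int) ell2" where
  "theta a = Abs_ell2 (Theta (Rep_ell2 a))"

lemma Rep_ell2_theta [simp]: "Rep_ell2 (theta a) = Theta (Rep_ell2 a)"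
  by (simp add: theta_def square_summable_Theta)

lemma theta_theta [simp]: "theta (theta a) = a"
  by (rule ell2_eqI) (simp add: Theta_apply)

lemma theta_add: "theta (a + b) = theta a + theta b"
  by (rule ell2_eqI) (simp add: Theta_apply)

lemma theta_diff: "theta (a - b) = theta a - theta b"
  by (rule ell2_eqI) (simp add: Theta_apply)

lemma theta_scaleR: "theta (r *\<^sub>R a) = r *\<^sub>R theta a"
  by (rule ell2_eqI) (simp add: Theta_apply)

lemma cinner_theta: "cinner (theta a) b = cinner a (theta b)"
proof -
  have "cinner a (theta b) = (\<Sum>\<^sub>\<infinity>p. cnj (Rep_ell2 (theta a) (Theta_index p)) * Rep_ell2 b (Theta_index p))"
    by (simp add: cinner_def Theta_apply)
  also have "\<dots> = cinner (theta a) b"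
    unfolding cinner_def by (rule infsum_Theta_index)
  finally show ?thesis ..
qed

lemma norm_theta: "norm (theta a) = norm a"
  unfolding norm_ell2_def Rep_ell2_theta Theta_apply by (rule arg_cong[OF infsum_Theta_index])

lemma bounded_linear_theta: "bounded_linear theta"
  by (rule bounded_linear_intro[where K = 1]) (simp_all add: theta_add theta_scaleR norm_theta)

definition even_part :: "(int \<times> int) ell2 \<Rightarrow> (int \<times> int) ell2" where
  "even_part a = (1 / 2) *\<^sub>R (a + theta a)"

definition odd_part :: "(int \<times> int) ell2 \<Rightarrow> (int \<times> int) ell2" where
  "odd_part a = (1 / 2) *\<^sub>R (a - theta a)"

lemma theta_even_part: "theta (even_part a) = even_part a"
  by (simp add: even_part_def theta_scaleR theta_add add.commute)

lemma theta_odd_part: "theta (odd_part a) = - odd_part a"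
  by (simp add: odd_part_def theta_scaleR theta_diff flip: scaleR_minus_right)

lemma even_part_idem: "even_part (even_part a) = even_part a"
  by (simp add: even_part_def [of "even_part a"] theta_even_part)

lemma odd_part_eq_self: "theta a = - a \<Longrightarrow> odd_part a = a"
  by (simp add: odd_part_def scaleR_2[symmetric])

lemma cinner_even_odd_eq_0:
  assumes "theta a = a" and "theta b = - b"
  shows "cinner a b = 0"
proof -
  have "cinner a b = cinner (theta a) b"
    using assms(1) by simp
  also have "\<dots> = - cinner a b"
    by (simp add: cinner_theta assms(2) cinner_minus_right)
  finally show ?thesis
    by simp
qed

lemma cinner_odd_even_eq_0:
  assumes "theta a = - a" and "theta b = b"
  shows "cinner a b = 0"
  using cinner_even_odd_eq_0[OF assms(2,1)] by (simp add: cinner_commute[of a])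

lemma cinner_theta_even_odd:
  "cinner (theta f) g = cinner (even_part f) (even_part g) - cinner (odd_part f) (odd_part g)"
proof -
  have "theta f = even_part f - odd_part f" and "g = even_part g + odd_part g"
    by (simp_all add: even_part_def odd_part_def algebra_simps flip: scaleR_add_right scaleR_diff_right)
  then have "cinner (theta f) g = cinner (even_part f - odd_part f) (even_part g + odd_part g)"
    by simp
  moreover have "cinner (even_part f) (odd_part g) = 0"
    by (rule cinner_even_odd_eq_0) (simp_all add: theta_even_part theta_odd_part)
  moreover have "cinner (odd_part f) (even_part g) = 0"
    by (rule cinner_odd_even_eq_0) (simp_all add: theta_even_part theta_odd_part)
  ultimately show ?thesis
    by (simp add: cinner_diff_left cinner_add_right)
qed

definition half_sign :: "int \<times> int \<Rightarrow> complex" where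
  "half_sign p =
     (if fst p + 2 * snd p > 0 then 1 else if fst p + 2 * snd p < 0 then - 1 else 0)"

lemma norm_half_sign_le: "cmod (half_sign p) \<le> 1"
  by (simp add: half_sign_def)

lemma half_sign_Theta_index: "half_sign (Theta_index p) = - half_sign p"
  by (cases p) (simp add: half_sign_def Theta_index_def)

definition sign_mult :: "(int \<times> int) ell2 \<Rightarrow> (int \<times> int) ell2" where
  "sign_mult a = Abs_ell2 (\<lambda>p. half_sign p * Rep_ell2 a p)"

lemma Rep_ell2_sign_mult [simp]: "Rep_ell2 (sign_mult a) = (\<lambda>p. half_sign p * Rep_ell2 a p)"
  using square_summable_bounded_mult[of "Rep_ell2 a" half_sign, OF _ norm_half_sign_le]
  by (simp add: sign_mult_def)

lemma norm_sign_mult_le: "norm (sign_mult a) \<le> norm a"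
proof -
  have "(\<Sum>\<^sub>\<infinity>p. (cmod (half_sign p * Rep_ell2 a p))\<^sup>2) \<le> (\<Sum>\<^sub>\<infinity>p. (cmod (Rep_ell2 a p))\<^sup>2)"
  proof (rule infsum_mono)
    show "(\<lambda>p. (cmod (half_sign p * Rep_ell2 a p))\<^sup>2) summable_on UNIV"
      using square_summable_Rep_ell2[of "sign_mult a"] by (simp add: square_summable_def)
    show "(\<lambda>p. (cmod (Rep_ell2 a p))\<^sup>2) summable_on UNIV"
      using square_summable_Rep_ell2[of a] by (simp add: square_summable_def)
    show "(cmod (half_sign p * Rep_ell2 a p))\<^sup>2 \<le> (cmod (Rep_ell2 a p))\<^sup>2" for p
      by (simp add: half_sign_def norm_mult)
  qed
  then show ?thesis
    by (simp add: norm_ell2_def)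
qed

lemma bounded_linear_sign_mult: "bounded_linear sign_mult"
  by (rule bounded_linear_intro[where K = 1])
     (auto intro!: ell2_eqI simp: norm_sign_mult_le algebra_simps)

lemma Theta_Rep_ell2_if_odd: "theta a = - a \<Longrightarrow> Theta (Rep_ell2 a) p = - Rep_ell2 a p"
  by (metis Rep_ell2_theta Rep_ell2_uminus)

lemma theta_sign_mult_odd:
  assumes "theta a = - a"
  shows "theta (sign_mult a) = sign_mult a"
proof (rule ell2_eqI)
  fix p
  have "Rep_ell2 a (Theta_index p) = - Rep_ell2 a p"
    using Theta_Rep_ell2_if_odd[OF assms, of p] by (simp add: Theta_apply)
  then show "Rep_ell2 (theta (sign_mult a)) p = Rep_ell2 (sign_mult a) p"
    by (simp add: Theta_apply half_sign_Theta_index)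
qed

lemma cinner_sign_mult_Hplus:
  assumes "theta a = - a" and Hplus: "\<And>n k. n + 2 * k < 0 \<Longrightarrow> Rep_ell2 f (n, k) = 0"
  shows "cinner (sign_mult a) f = cinner a f"
proof -
  have pointwise: "cnj (half_sign p * Rep_ell2 a p) * Rep_ell2 f p = cnj (Rep_ell2 a p) * Rep_ell2 f p" for p
  proof (cases p)
    case (Pair n k)
    consider "n + 2 * k > 0" | "n + 2 * k < 0" | "n + 2 * k = 0"
      by linarith
    then show ?thesis
    proof cases
      case 3
      then have "Rep_ell2 a (n, k) = 0"
        using Theta_odd_vanishes[OF Theta_Rep_ell2_if_odd[OF assms(1)]] by blast
      then show ?thesis
        by (simp add: Pair)
    qed (simp_all add: Pair half_sign_def Hplus)
  qed
  then show ?thesis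
    unfolding cinner_def Rep_ell2_sign_mult by (intro infsum_cong pointwise)
qed

lemma cinner_sign_mult_even_part:
  assumes "theta a = - a" and "\<And>n k. n + 2 * k < 0 \<Longrightarrow> Rep_ell2 f (n, k) = 0"
  shows "cinner (sign_mult a) (even_part f) = cinner a (odd_part f)"
proof -
  have f: "f = even_part f + odd_part f"
    by (simp add: even_part_def odd_part_def flip: scaleR_add_right)
  have "cinner (sign_mult a) (odd_part f) = 0"
    by (rule cinner_even_odd_eq_0) (simp_all add: theta_sign_mult_odd assms(1) theta_odd_part)
  then have "cinner (sign_mult a) (even_part f) = cinner (sign_mult a) f"
    by (subst (2) f) (simp add: cinner_add_right)
  also have "\<dots> = cinner a f"
    using assms by (rule cinner_sign_mult_Hplus)
  also have "\<dots> = cinner a (odd_part f)"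
    using cinner_odd_even_eq_0[OF assms(1) theta_even_part[of f]]
    by (subst f) (simp add: cinner_add_right)
  finally show ?thesis .
qed

section \<open>The graph of D_beta\<close>

lemma Dop_apply: "Dop \<beta> f (n, k) = \<beta> (k + n - 1) * f (n - 1, k) - \<beta> (- k - 1) * f (n - 1, k + 1)"
  by (simp add: Dop_def)

lemma Dop_add: "Dop \<beta> (\<lambda>p. f p + g p) = (\<lambda>p. Dop \<beta> f p + Dop \<beta> g p)"
  by (auto simp: Dop_def algebra_simps fun_eq_iff)

lemma Dop_scale: "Dop \<beta> (\<lambda>p. c * f p) = (\<lambda>p. c * Dop \<beta> f p)"
  by (auto simp: Dop_def algebra_simps fun_eq_iff)

lemma Dop_Theta: "Dop \<beta> (Theta f) = (\<lambda>p. - Theta (Dop \<beta> f) p)"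
proof
  fix p :: "int \<times> int"
  obtain n k where p: "p = (n, k)"
    by fastforce
  have "- k - (n - 1) = - k - n + 1" and "- (k + 1) - (n - 1) = - k - n"
    and "- k - n + n - 1 = - k - 1" and "- (- k - n) - 1 = k + n - 1"
    by simp_all
  then show "Dop \<beta> (Theta f) p = - Theta (Dop \<beta> f) p"
    unfolding p by (simp add: Dop_apply Theta_def algebra_simps)
qed

text \<open>For a \<open>\<Theta>\<close>-odd \<open>f\<close> the sign of \<open>n + 2k\<close> commutes with \<open>D\<^sub>\<beta>\<close>: the two
  coefficients feeding \<open>(D\<^sub>\<beta> f)(n, k)\<close> sit at \<open>n + 2k \<plusminus> 1\<close>, and on the line
  \<open>n + 2k = 0\<close> their contributions cancel.\<close>

lemma Dop_half_sign:
  assumes odd: "\<And>p. Theta f p = - f p"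
  shows "Dop \<beta> (\<lambda>p. half_sign p * f p) p = half_sign p * Dop \<beta> f p"
proof -
  obtain n k where p: "p = (n, k)"
    by fastforce
  consider "n + 2 * k \<ge> 2" | "n + 2 * k = 1" | "n + 2 * k = 0" | "n + 2 * k = - 1" | "n + 2 * k \<le> - 2"
    by linarith
  then show ?thesis
  proof cases
    case 2
    then have "f (n - 1, k) = 0"
      by (intro Theta_odd_vanishes[OF odd]) simp
    then show ?thesis
      using 2 by (simp add: p Dop_apply half_sign_def)
  next
    case 3
    then have reflected: "- k - (n - 1) = k + 1"
      by simp
    have f_reflected: "f (n - 1, k + 1) = - f (n - 1, k)"
      using odd[of "(n - 1, k)"] by (simp only: Theta_def case_prod_conv reflected)
    have \<beta>_reflected: "\<beta> (k + n - 1) = \<beta> (- k - 1)"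
      using 3 by (intro arg_cong[where f = \<beta>]) simp
    show ?thesis
      using 3 by (simp add: p Dop_apply half_sign_def f_reflected \<beta>_reflected)
  next
    case 4
    then have "f (n - 1, k + 1) = 0"
      by (intro Theta_odd_vanishes[OF odd]) simp
    then show ?thesis
      using 4 by (simp add: p Dop_apply half_sign_def)
  qed (simp_all add: p Dop_apply half_sign_def)
qed

lemma in_D_add: "in_D f \<Longrightarrow> in_D g \<Longrightarrow> in_D (\<lambda>p. f p + g p)"
  unfolding in_D_def by (rule finite_subset[of _ "{p. f p \<noteq> 0} \<union> {p. g p \<noteq> 0}"]) auto

lemma in_D_uminus: "in_D f \<Longrightarrow> in_D (\<lambda>p. - f p)"
  unfolding in_D_def by simp

lemma in_D_diff: "in_D f \<Longrightarrow> in_D g \<Longrightarrow> in_D (\<lambda>p. f p - g p)"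
  using in_D_add[of f "\<lambda>p. - g p"] in_D_uminus[of g] by simp

lemma in_D_mult: "in_D f \<Longrightarrow> in_D (\<lambda>p. s p * f p)"
  unfolding in_D_def by (rule finite_subset[of _ "{p. f p \<noteq> 0}"]) auto

lemma in_D_Theta: "in_D f \<Longrightarrow> in_D (Theta f)"
proof -
  assume "in_D f"
  then have "finite (Theta_index -` {p. f p \<noteq> 0})"
    unfolding in_D_def by (rule finite_vimageI[OF _ bij_betw_imp_inj_on[OF bij_betw_Theta_index]])
  moreover have "{p. Theta f p \<noteq> 0} = Theta_index -` {p. f p \<noteq> 0}"
    by (auto simp: Theta_apply)
  ultimately show ?thesis
    unfolding in_D_def by simp
qed

lemma in_D_Dop: "in_D f \<Longrightarrow> in_D (Dop \<beta> f)"
proof -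
  assume "in_D f"
  let ?S = "{p. f p \<noteq> 0}"
  have "{p. Dop \<beta> f p \<noteq> 0} \<subseteq> (\<lambda>(n, k). (n + 1, k)) ` ?S \<union> (\<lambda>(n, k). (n + 1, k - 1)) ` ?S"
  proof
    fix p
    assume "p \<in> {p. Dop \<beta> f p \<noteq> 0}"
    moreover obtain n k where p: "p = (n, k)"
      by fastforce
    ultimately have "(n - 1, k) \<in> ?S \<or> (n - 1, k + 1) \<in> ?S"
      by (auto simp: Dop_apply)
    then show "p \<in> (\<lambda>(n, k). (n + 1, k)) ` ?S \<union> (\<lambda>(n, k). (n + 1, k - 1)) ` ?S"
      unfolding p by (force intro: image_eqI)
  qed
  then show ?thesis
    unfolding in_D_def by (rule finite_subset) (use \<open>in_D f\<close> in \<open>simp add: in_D_def\<close>)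
qed

lemma square_summable_if_in_D: "in_D f \<Longrightarrow> square_summable f"
  by (simp add: in_D_def square_summable_finite_support)

definition D_graph :: "(int \<Rightarrow> complex) \<Rightarrow> ((int \<times> int) ell2 \<times> (int \<times> int) ell2) set" where
  "D_graph \<beta> = (\<lambda>\<phi>. (Abs_ell2 \<phi>, Abs_ell2 (Dop \<beta> \<phi>))) ` {\<phi>. in_D \<phi>}"

definition D_graph_closure :: "(int \<Rightarrow> complex) \<Rightarrow> ((int \<times> int) ell2 \<times> (int \<times> int) ell2) set" where
  "D_graph_closure \<beta> = closure (D_graph \<beta>)"

lemma D_graph_memI: "in_D \<phi> \<Longrightarrow> (Abs_ell2 \<phi>, Abs_ell2 (Dop \<beta> \<phi>)) \<in> D_graph \<beta>"
  by (simp add: D_graph_def)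

lemma subspace_D_graph: "subspace (D_graph \<beta>)"
  unfolding subspace_def
proof (intro conjI ballI allI)
  have "Dop \<beta> (\<lambda>_. 0) = (\<lambda>_. 0)"
    by (simp add: Dop_def fun_eq_iff)
  then show "0 \<in> D_graph \<beta>"
    using D_graph_memI[of "\<lambda>_. 0" \<beta>] by (simp add: in_D_def zero_prod_def zero_ell2_def)
next
  fix p q
  assume "p \<in> D_graph \<beta>" "q \<in> D_graph \<beta>"
  then obtain \<phi> \<psi> where "in_D \<phi>" "in_D \<psi>"
    and "p = (Abs_ell2 \<phi>, Abs_ell2 (Dop \<beta> \<phi>))" "q = (Abs_ell2 \<psi>, Abs_ell2 (Dop \<beta> \<psi>))"
    by (auto simp: D_graph_def)
  then show "p + q \<in> D_graph \<beta>"
    using D_graph_memI[OF in_D_add[of \<phi> \<psi>], of \<beta>]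
    by (simp add: Abs_ell2_add Dop_add square_summable_if_in_D in_D_Dop)
next
  fix r :: real and p
  assume "p \<in> D_graph \<beta>"
  then obtain \<phi> where "in_D \<phi>" and "p = (Abs_ell2 \<phi>, Abs_ell2 (Dop \<beta> \<phi>))"
    by (auto simp: D_graph_def)
  then show "r *\<^sub>R p \<in> D_graph \<beta>"
    using D_graph_memI[OF in_D_mult[of \<phi> "\<lambda>_. complex_of_real r"], of \<beta>]
    by (simp add: Abs_ell2_scaleR Dop_scale square_summable_if_in_D in_D_Dop)
qed

lemma subspace_D_graph_closure: "subspace (D_graph_closure \<beta>)"
  unfolding D_graph_closure_def by (rule subspace_closure[OF subspace_D_graph])

lemma closed_D_graph_closure: "closed (D_graph_closure \<beta>)"
  by (simp add: D_graph_closure_def)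

lemma D_graph_closure_map:
  assumes "bounded_linear f" and "bounded_linear g"
    and core: "\<And>\<phi>. in_D \<phi> \<Longrightarrow> \<exists>\<psi>. in_D \<psi> \<and>
      f (Abs_ell2 \<phi>) = Abs_ell2 \<psi> \<and> g (Abs_ell2 (Dop \<beta> \<phi>)) = Abs_ell2 (Dop \<beta> \<psi>)"
    and "(a, b) \<in> D_graph_closure \<beta>"
  shows "(f a, g b) \<in> D_graph_closure \<beta>"
proof -
  have "map_prod f g ` D_graph \<beta> \<subseteq> D_graph \<beta>"
  proof
    fix q
    assume "q \<in> map_prod f g ` D_graph \<beta>"
    then obtain \<phi> where "in_D \<phi>" and q: "q = (f (Abs_ell2 \<phi>), g (Abs_ell2 (Dop \<beta> \<phi>)))"
      by (auto simp: D_graph_def)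
    then obtain \<psi> where "in_D \<psi>" and "q = (Abs_ell2 \<psi>, Abs_ell2 (Dop \<beta> \<psi>))"
      using core by metis
    then show "q \<in> D_graph \<beta>"
      by (simp add: D_graph_memI)
  qed
  then have "map_prod f g ` D_graph_closure \<beta> \<subseteq> D_graph_closure \<beta>"
    unfolding D_graph_closure_def
    by (rule closure_image_subset_bounded_linear[OF bounded_linear_map_prod[OF assms(1,2)]])
  then show ?thesis
    using \<open>(a, b) \<in> D_graph_closure \<beta>\<close> by force
qed

lemma D_graph_closure_cscale:
  "(a, b) \<in> D_graph_closure \<beta> \<Longrightarrow> (cscale c a, cscale c b) \<in> D_graph_closure \<beta>"
proof (rule D_graph_closure_map[OF bounded_linear_cscale bounded_linear_cscale])
  fix \<phi>
  assume "in_D \<phi>"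
  then show "\<exists>\<psi>. in_D \<psi> \<and> cscale c (Abs_ell2 \<phi>) = Abs_ell2 \<psi> \<and>
      cscale c (Abs_ell2 (Dop \<beta> \<phi>)) = Abs_ell2 (Dop \<beta> \<psi>)"
    by (intro exI[of _ "\<lambda>p. c * \<phi> p"])
       (auto intro!: ell2_eqI in_D_mult simp: Dop_scale square_summable_if_in_D in_D_Dop in_D_mult)
qed

lemma D_graph_closure_theta:
  "(a, b) \<in> D_graph_closure \<beta> \<Longrightarrow> (theta a, - theta b) \<in> D_graph_closure \<beta>"
proof (rule D_graph_closure_map[OF bounded_linear_theta bounded_linear_minus[OF bounded_linear_theta]])
  fix \<phi>
  assume "in_D \<phi>"
  then show "\<exists>\<psi>. in_D \<psi> \<and> theta (Abs_ell2 \<phi>) = Abs_ell2 \<psi> \<and>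
      - theta (Abs_ell2 (Dop \<beta> \<phi>)) = Abs_ell2 (Dop \<beta> \<psi>)"
    by (intro exI[of _ "Theta \<phi>"])
       (auto intro!: ell2_eqI in_D_Theta simp: Dop_Theta square_summable_if_in_D in_D_Dop in_D_Theta in_D_uminus)
qed

lemma bounded_linear_even_part: "bounded_linear even_part"
  unfolding even_part_def
  by (intro bounded_linear_compose[OF bounded_linear_scaleR_right]
      bounded_linear_add bounded_linear_ident bounded_linear_theta)

lemma bounded_linear_odd_part: "bounded_linear odd_part"
  unfolding odd_part_def
  by (intro bounded_linear_compose[OF bounded_linear_scaleR_right]
      bounded_linear_sub bounded_linear_ident bounded_linear_theta)

lemma D_graph_closure_sign_mult:
  assumes "(a, b) \<in> D_graph_closure \<beta>" and "theta a = - a"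
  shows "(sign_mult a, sign_mult (even_part b)) \<in> D_graph_closure \<beta>"
proof -
  have "(sign_mult (odd_part a), sign_mult (even_part b)) \<in> D_graph_closure \<beta>"
  proof (rule D_graph_closure_map[OF _ _ _ assms(1)])
    show "bounded_linear (\<lambda>a. sign_mult (odd_part a))"
      by (rule bounded_linear_compose[OF bounded_linear_sign_mult bounded_linear_odd_part])
    show "bounded_linear (\<lambda>b. sign_mult (even_part b))"
      by (rule bounded_linear_compose[OF bounded_linear_sign_mult bounded_linear_even_part])
    fix \<phi>
    assume "in_D \<phi>"
    define \<phi>\<^sub>o where "\<phi>\<^sub>o = (\<lambda>p. complex_of_real (1 / 2) * (\<phi> p - Theta \<phi> p))"
    have odd: "Theta \<phi>\<^sub>o p = - \<phi>\<^sub>o p" for p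
      by (simp add: \<phi>\<^sub>o_def Theta_apply algebra_simps)
    have "in_D \<phi>\<^sub>o"
      unfolding \<phi>\<^sub>o_def by (intro in_D_mult in_D_diff in_D_Theta \<open>in_D \<phi>\<close>)
    have Dop_odd: "Dop \<beta> \<phi>\<^sub>o = (\<lambda>p. complex_of_real (1 / 2) * (Dop \<beta> \<phi> p + Theta (Dop \<beta> \<phi>) p))"
      using Dop_scale[of \<beta> "complex_of_real (1 / 2)" "\<lambda>p. \<phi> p - Theta \<phi> p"]
        Dop_add[of \<beta> \<phi> "\<lambda>p. - 1 * Theta \<phi> p"] Dop_scale[of \<beta> "- 1" "Theta \<phi>"] Dop_Theta[of \<beta> \<phi>]
      by (simp add: \<phi>\<^sub>o_def)
    have odd_rep: "Rep_ell2 (odd_part (Abs_ell2 \<phi>)) = \<phi>\<^sub>o"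
      using \<open>in_D \<phi>\<close> by (simp add: odd_part_def \<phi>\<^sub>o_def square_summable_if_in_D)
    have even_rep: "Rep_ell2 (even_part (Abs_ell2 (Dop \<beta> \<phi>))) = Dop \<beta> \<phi>\<^sub>o"
      using \<open>in_D \<phi>\<close> by (simp add: even_part_def Dop_odd square_summable_if_in_D in_D_Dop)
    have "in_D (\<lambda>p. half_sign p * \<phi>\<^sub>o p)"
      using \<open>in_D \<phi>\<^sub>o\<close> by (rule in_D_mult)
    moreover have "sign_mult (odd_part (Abs_ell2 \<phi>)) = Abs_ell2 (\<lambda>p. half_sign p * \<phi>\<^sub>o p)"
      using calculation by (intro ell2_eqI) (simp add: odd_rep square_summable_if_in_D)
    moreover have "sign_mult (even_part (Abs_ell2 (Dop \<beta> \<phi>))) = Abs_ell2 (Dop \<beta> (\<lambda>p. half_sign p * \<phi>\<^sub>o p))"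
      using calculation(1) by (intro ell2_eqI)
        (simp add: even_rep Dop_half_sign[OF odd] square_summable_if_in_D in_D_Dop)
    ultimately show "\<exists>\<psi>. in_D \<psi> \<and> sign_mult (odd_part (Abs_ell2 \<phi>)) = Abs_ell2 \<psi> \<and>
        sign_mult (even_part (Abs_ell2 (Dop \<beta> \<phi>))) = Abs_ell2 (Dop \<beta> \<psi>)"
      by blast
  qed
  then show ?thesis
    using assms(2) by (simp add: odd_part_eq_self)
qed

section \<open>Positivity\<close>

lemma weak_resolvent_theta:
  assumes "weak_resolvent (D_graph_closure \<beta>) m2 f g h"
  shows "weak_resolvent (D_graph_closure \<beta>) m2 (theta f) (theta g) (- theta h)"
  unfolding weak_resolvent_def
proof (intro conjI allI impI)
  show "(theta g, - theta h) \<in> D_graph_closure \<beta>"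
    using assms D_graph_closure_theta by (auto simp: weak_resolvent_def)
  fix x y
  assume "(x, y) \<in> D_graph_closure \<beta>"
  then have "(theta x, - theta y) \<in> D_graph_closure \<beta>"
    by (rule D_graph_closure_theta)
  then have "cinner (theta x) f = cinner (- theta y) h + of_real m2 * cinner (theta x) g"
    using assms by (simp add: weak_resolvent_def)
  then show "cinner x (theta f) = cinner y (- theta h) + of_real m2 * cinner x (theta g)"
    by (simp add: cinner_theta cinner_minus_left cinner_minus_right)
qed

lemma weak_resolvent_even_part:
  assumes "weak_resolvent (D_graph_closure \<beta>) m2 f g h"
  shows "weak_resolvent (D_graph_closure \<beta>) m2 (even_part f) (even_part g) (odd_part h)"
proof -
  have "weak_resolvent (D_graph_closure \<beta>) m2 ((1 / 2) *\<^sub>R (f + theta f))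
      ((1 / 2) *\<^sub>R (g + theta g)) ((1 / 2) *\<^sub>R (h + - theta h))"
    using assms weak_resolvent_theta[OF assms]
    by (intro weak_resolvent_scaleR weak_resolvent_add subspace_D_graph_closure)
  then show ?thesis
    by (simp add: even_part_def odd_part_def)
qed

lemma weak_resolvent_odd_part:
  assumes "weak_resolvent (D_graph_closure \<beta>) m2 f g h"
  shows "weak_resolvent (D_graph_closure \<beta>) m2 (odd_part f) (odd_part g) (even_part h)"
proof -
  have "weak_resolvent (D_graph_closure \<beta>) m2 ((1 / 2) *\<^sub>R (f - theta f))
      ((1 / 2) *\<^sub>R (g - theta g)) ((1 / 2) *\<^sub>R (h - - theta h))"
    using assms weak_resolvent_theta[OF assms]
    by (intro weak_resolvent_scaleR weak_resolvent_diff subspace_D_graph_closure)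
  then show ?thesis
    by (simp add: even_part_def odd_part_def)
qed

lemma odd_energy_le_even_energy:
  assumes "weak_resolvent (D_graph_closure \<beta>) m2 f g h" and "0 \<le> m2"
    and Hplus: "\<And>n k. n + 2 * k < 0 \<Longrightarrow> Rep_ell2 f (n, k) = 0"
  shows "Re (cinner (odd_part g) (odd_part f)) \<le> Re (cinner (even_part g) (even_part f))"
proof -
  note even = weak_resolvent_even_part[OF assms(1)]
  note odd = weak_resolvent_odd_part[OF assms(1)]
  define x where "x = sign_mult (odd_part g)"
  define y where "y = sign_mult (even_part h)"
  have "(odd_part g, even_part h) \<in> D_graph_closure \<beta>"
    using odd by (simp add: weak_resolvent_def)
  then have xy: "(x, y) \<in> D_graph_closure \<beta>"
    unfolding x_def y_def using D_graph_closure_sign_mult[OF _ theta_odd_part] even_part_idem by metis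
  have "2 * Re (cinner x (even_part f)) - (norm y)\<^sup>2 - m2 * (norm x)\<^sup>2
      \<le> (norm (odd_part h))\<^sup>2 + m2 * (norm (even_part g))\<^sup>2"
    using even xy \<open>0 \<le> m2\<close> by (rule weak_resolvent_variational_bound)
  moreover have "Re (cinner x (even_part f)) = Re (cinner (odd_part g) (odd_part f))"
    unfolding x_def by (simp add: cinner_sign_mult_even_part[OF theta_odd_part Hplus])
  moreover have "(norm y)\<^sup>2 \<le> (norm (even_part h))\<^sup>2" and "m2 * (norm x)\<^sup>2 \<le> m2 * (norm (odd_part g))\<^sup>2"
    unfolding x_def y_def using \<open>0 \<le> m2\<close>
    by (simp_all add: norm_sign_mult_le power_mono mult_left_mono)
  moreover have "Re (cinner (odd_part g) (odd_part f)) = (norm (even_part h))\<^sup>2 + m2 * (norm (odd_part g))\<^sup>2"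
    using weak_resolvent_energy[OF odd] by simp
  moreover have "Re (cinner (even_part g) (even_part f)) = (norm (odd_part h))\<^sup>2 + m2 * (norm (even_part g))\<^sup>2"
    using weak_resolvent_energy[OF even] by simp
  ultimately show ?thesis
    by linarith
qed

lemma weak_resolvent_cinner_theta_nonneg:
  assumes "weak_resolvent (D_graph_closure \<beta>) m2 f g h" and "0 \<le> m2"
    and "\<And>n k. n + 2 * k < 0 \<Longrightarrow> Rep_ell2 f (n, k) = 0"
  shows "Im (cinner (theta f) g) = 0 \<and> 0 \<le> Re (cinner (theta f) g)"
proof -
  define E\<^sub>e where "E\<^sub>e = (norm (odd_part h))\<^sup>2 + m2 * (norm (even_part g))\<^sup>2"
  define E\<^sub>o where "E\<^sub>o = (norm (even_part h))\<^sup>2 + m2 * (norm (odd_part g))\<^sup>2"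
  have "cinner (even_part g) (even_part f) = of_real E\<^sub>e"
    unfolding E\<^sub>e_def by (rule weak_resolvent_energy[OF weak_resolvent_even_part[OF assms(1)]])
  moreover have "cinner (odd_part g) (odd_part f) = of_real E\<^sub>o"
    unfolding E\<^sub>o_def by (rule weak_resolvent_energy[OF weak_resolvent_odd_part[OF assms(1)]])
  ultimately have "cinner (theta f) g = of_real (E\<^sub>e - E\<^sub>o)" and "E\<^sub>o \<le> E\<^sub>e"
    using cinner_theta_even_odd[of f g] odd_energy_le_even_energy[OF assms]
    by (simp_all add: cinner_commute[of "even_part f"] cinner_commute[of "odd_part f"])
  then show ?thesis
    by simp
qed

section \<open>Hilbert-Schmidt coefficients\<close>

lemma hs_norm_diff_eq_norm:
  assumes "square_summable f" and "square_summable g"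
  shows "hs_norm (f - g) = norm (Abs_ell2 f - Abs_ell2 g)"
  using assms by (simp add: hs_norm_def norm_ell2_def)

lemma hs_inner_eq_cinner:
  assumes "square_summable f" and "square_summable g"
  shows "hs_inner f g = cinner (Abs_ell2 f) (Abs_ell2 g)"
  using assms by (simp add: hs_inner_def cinner_def)

lemma D_graph_closure_sequential:
  "(a, b) \<in> D_graph_closure \<beta> \<longleftrightarrow> (\<exists>\<phi>. (\<forall>j. in_D (\<phi> j)) \<and>
     (\<lambda>j. Abs_ell2 (\<phi> j)) \<longlonglongrightarrow> a \<and> (\<lambda>j. Abs_ell2 (Dop \<beta> (\<phi> j))) \<longlonglongrightarrow> b)"
proof
  assume "(a, b) \<in> D_graph_closure \<beta>"
  then obtain s where s: "\<And>j. s j \<in> D_graph \<beta>" and "s \<longlonglongrightarrow> (a, b)"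
    unfolding D_graph_closure_def closure_sequential by blast
  have "\<forall>j. \<exists>\<phi>. in_D \<phi> \<and> s j = (Abs_ell2 \<phi>, Abs_ell2 (Dop \<beta> \<phi>))"
    using s by (auto simp: D_graph_def)
  then obtain \<phi> where \<phi>: "\<forall>j. in_D (\<phi> j)"
    and s_eq: "\<And>j. s j = (Abs_ell2 (\<phi> j), Abs_ell2 (Dop \<beta> (\<phi> j)))"
    by metis
  have "s = (\<lambda>j. (Abs_ell2 (\<phi> j), Abs_ell2 (Dop \<beta> (\<phi> j))))"
    using s_eq by (rule ext)
  with \<open>s \<longlonglongrightarrow> (a, b)\<close> have conv: "(\<lambda>j. (Abs_ell2 (\<phi> j), Abs_ell2 (Dop \<beta> (\<phi> j)))) \<longlonglongrightarrow> (a, b)"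
    by simp
  show "\<exists>\<phi>. (\<forall>j. in_D (\<phi> j)) \<and>
      (\<lambda>j. Abs_ell2 (\<phi> j)) \<longlonglongrightarrow> a \<and> (\<lambda>j. Abs_ell2 (Dop \<beta> (\<phi> j))) \<longlonglongrightarrow> b"
    using \<phi> tendsto_fst[OF conv] tendsto_snd[OF conv] by auto
next
  assume "\<exists>\<phi>. (\<forall>j. in_D (\<phi> j)) \<and>
      (\<lambda>j. Abs_ell2 (\<phi> j)) \<longlonglongrightarrow> a \<and> (\<lambda>j. Abs_ell2 (Dop \<beta> (\<phi> j))) \<longlonglongrightarrow> b"
  then obtain \<phi> where "\<And>j. in_D (\<phi> j)" and "(\<lambda>j. Abs_ell2 (\<phi> j)) \<longlonglongrightarrow> a"
    and "(\<lambda>j. Abs_ell2 (Dop \<beta> (\<phi> j))) \<longlonglongrightarrow> b"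
    by blast
  then show "(a, b) \<in> D_graph_closure \<beta>"
    unfolding D_graph_closure_def closure_sequential
    by (intro exI[of _ "\<lambda>j. (Abs_ell2 (\<phi> j), Abs_ell2 (Dop \<beta> (\<phi> j)))"])
      (simp add: D_graph_memI tendsto_Pair)
qed

lemma closD_iff: "closD \<beta> g h \<longleftrightarrow> HS g \<and> HS h \<and> (Abs_ell2 g, Abs_ell2 h) \<in> D_graph_closure \<beta>"
proof -
  have "(\<lambda>j. hs_norm (F j - u)) \<longlonglongrightarrow> 0 \<longleftrightarrow> (\<lambda>j. Abs_ell2 (F j)) \<longlonglongrightarrow> Abs_ell2 u"
    if "\<And>j. square_summable (F j)" and "square_summable u" for F u
    using that by (simp add: hs_norm_diff_eq_norm tendsto_norm_zero_iff LIM_zero_iff)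
  then show ?thesis
    unfolding closD_def D_graph_closure_sequential HS_eq_square_summable
    by (auto simp: square_summable_if_in_D in_D_Dop)
qed

lemma closD_Rep_ell2_iff: "closD \<beta> (Rep_ell2 x) (Rep_ell2 y) \<longleftrightarrow> (x, y) \<in> D_graph_closure \<beta>"
  by (simp add: closD_iff HS_eq_square_summable Rep_ell2_inverse)

lemma Abs_ell2_diff_scaleR:
  assumes "square_summable f" and "square_summable g"
  shows "Abs_ell2 (\<lambda>p. f p - of_real m2 * g p) = Abs_ell2 f - m2 *\<^sub>R Abs_ell2 g"
  using assms by (intro ell2_eqI) (simp add: square_summable_diff square_summable_scale)

lemma weak_resolvent_if_is_resolvent:
  assumes "HS f" and "is_resolvent \<beta> m2 f g"
  shows "HS g \<and> (\<exists>h. weak_resolvent (D_graph_closure \<beta>) m2 (Abs_ell2 f) (Abs_ell2 g) h)"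
proof -
  obtain w h where closD: "closD \<beta> g h" and adjD: "adjD \<beta> h w"
    and w: "\<And>p. w p + of_real m2 * g p = f p"
    using assms(2) unfolding is_resolvent_def DstarD_def by blast
  have "square_summable g" "square_summable h" "square_summable w"
    using closD adjD by (auto simp: closD_def adjD_def HS_eq_square_summable)
  have "w = (\<lambda>p. f p - of_real m2 * g p)"
    using w by (simp add: fun_eq_iff eq_diff_eq)
  then have Abs_w: "Abs_ell2 w = Abs_ell2 f - m2 *\<^sub>R Abs_ell2 g"
    using assms(1) \<open>square_summable g\<close>
    by (simp add: Abs_ell2_diff_scaleR HS_eq_square_summable)
  have "weak_resolvent (D_graph_closure \<beta>) m2 (Abs_ell2 f) (Abs_ell2 g) (Abs_ell2 h)"
    unfolding weak_resolvent_def
  proof (intro conjI allI impI)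
    show "(Abs_ell2 g, Abs_ell2 h) \<in> D_graph_closure \<beta>"
      using closD by (simp add: closD_iff)
    fix x y
    assume "(x, y) \<in> D_graph_closure \<beta>"
    then have "hs_inner (Rep_ell2 y) h = hs_inner (Rep_ell2 x) w"
      using adjD by (simp add: adjD_def closD_Rep_ell2_iff)
    then have "cinner y (Abs_ell2 h) = cinner x (Abs_ell2 w)"
      using \<open>square_summable h\<close> \<open>square_summable w\<close>
      by (simp add: hs_inner_eq_cinner Rep_ell2_inverse)
    then show "cinner x (Abs_ell2 f) = cinner y (Abs_ell2 h) + of_real m2 * cinner x (Abs_ell2 g)"
      by (simp add: Abs_w cinner_diff_right cinner_scaleR_right)
  qed
  with \<open>square_summable g\<close> show ?thesis
    by (auto simp: HS_eq_square_summable)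
qed

lemma is_resolvent_if_weak_resolvent:
  assumes "HS f" and "HS g" and "weak_resolvent (D_graph_closure \<beta>) m2 (Abs_ell2 f) (Abs_ell2 g) h"
  shows "is_resolvent \<beta> m2 f g"
proof -
  define w where "w = (\<lambda>p. f p - of_real m2 * g p)"
  have "square_summable f" "square_summable g" "square_summable w"
    using assms(1,2) by (simp_all add: w_def HS_eq_square_summable square_summable_diff square_summable_scale)
  have Abs_w: "Abs_ell2 w = Abs_ell2 f - m2 *\<^sub>R Abs_ell2 g"
    unfolding w_def using \<open>square_summable f\<close> \<open>square_summable g\<close> by (rule Abs_ell2_diff_scaleR)
  have "closD \<beta> g (Rep_ell2 h)"
    using assms(2,3) by (simp add: weak_resolvent_def closD_iff HS_eq_square_summable Rep_ell2_inverse)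
  moreover have "adjD \<beta> (Rep_ell2 h) w"
    unfolding adjD_def
  proof (intro conjI allI impI)
    show "HS (Rep_ell2 h)" "HS w"
      using \<open>square_summable w\<close> by (simp_all add: HS_eq_square_summable)
    fix x y
    assume "closD \<beta> x y"
    then have "square_summable x" "square_summable y" "(Abs_ell2 x, Abs_ell2 y) \<in> D_graph_closure \<beta>"
      by (simp_all add: closD_iff HS_eq_square_summable)
    then have "cinner (Abs_ell2 x) (Abs_ell2 f) = cinner (Abs_ell2 y) h + of_real m2 * cinner (Abs_ell2 x) (Abs_ell2 g)"
      using assms(3) by (simp add: weak_resolvent_def)
    then show "hs_inner y (Rep_ell2 h) = hs_inner x w"
      using \<open>square_summable x\<close> \<open>square_summable y\<close> \<open>square_summable w\<close>
      by (simp add: hs_inner_eq_cinner Rep_ell2_inverse Abs_w cinner_diff_right cinner_scaleR_right)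
  qed
  ultimately show ?thesis
    unfolding is_resolvent_def DstarD_def by (auto simp: w_def)
qed

lemma is_resolvent_exists:
  assumes "HS f" and "0 < m2"
  shows "\<exists>g. is_resolvent \<beta> m2 f g"
proof -
  obtain g h where "weak_resolvent (D_graph_closure \<beta>) m2 (Abs_ell2 f) g h"
    using weak_resolvent_exists[OF closed_D_graph_closure subspace_D_graph_closure
        D_graph_closure_cscale \<open>0 < m2\<close>] by blast
  then have "is_resolvent \<beta> m2 f (Rep_ell2 g)"
    using is_resolvent_if_weak_resolvent[OF \<open>HS f\<close>] by (simp add: Rep_ell2_inverse HS_eq_square_summable)
  then show ?thesis
    by blast
qed

lemma is_resolvent_unique:
  assumes "HS f" and "0 < m2" and "is_resolvent \<beta> m2 f g\<^sub>1" and "is_resolvent \<beta> m2 f g\<^sub>2"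
  shows "g\<^sub>1 = g\<^sub>2"
proof -
  obtain h\<^sub>1 h\<^sub>2 where "HS g\<^sub>1" "HS g\<^sub>2"
    and "weak_resolvent (D_graph_closure \<beta>) m2 (Abs_ell2 f) (Abs_ell2 g\<^sub>1) h\<^sub>1"
    and "weak_resolvent (D_graph_closure \<beta>) m2 (Abs_ell2 f) (Abs_ell2 g\<^sub>2) h\<^sub>2"
    using weak_resolvent_if_is_resolvent[OF \<open>HS f\<close> assms(3)]
      weak_resolvent_if_is_resolvent[OF \<open>HS f\<close> assms(4)] by blast
  then have "Abs_ell2 g\<^sub>1 = Abs_ell2 g\<^sub>2"
    by (intro weak_resolvent_unique[OF subspace_D_graph_closure \<open>0 < m2\<close>])
  with \<open>HS g\<^sub>1\<close> \<open>HS g\<^sub>2\<close> show ?thesis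
    by (simp add: Abs_ell2_inject HS_eq_square_summable)
qed

lemma is_resolvent_Theta_inner_nonneg:
  assumes "in_Hplus f" and "0 \<le> m2" and "is_resolvent \<beta> m2 f g"
  shows "Im (hs_inner (Theta f) g) = 0 \<and> 0 \<le> Re (hs_inner (Theta f) g)"
proof -
  from assms(1) have "HS f" and Hplus: "\<And>n k. n + 2 * k < 0 \<Longrightarrow> f (n, k) = 0"
    by (auto simp: in_Hplus_def)
  obtain h where "HS g" and "weak_resolvent (D_graph_closure \<beta>) m2 (Abs_ell2 f) (Abs_ell2 g) h"
    using weak_resolvent_if_is_resolvent[OF \<open>HS f\<close> assms(3)] by blast
  moreover have "hs_inner (Theta f) g = cinner (theta (Abs_ell2 f)) (Abs_ell2 g)"
    using \<open>HS f\<close> \<open>HS g\<close>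
    by (simp add: hs_inner_eq_cinner theta_def HS_eq_square_summable square_summable_Theta)
  ultimately show ?thesis
    using weak_resolvent_cinner_theta_nonneg[of \<beta> m2 "Abs_ell2 f" "Abs_ell2 g" h] \<open>HS f\<close> Hplus
      \<open>0 \<le> m2\<close> by (simp add: HS_eq_square_summable)
qed

theorem mainTheorem3:
  fixes \<beta> :: "int \<Rightarrow> complex" and m2 :: real and f :: hs
  assumes "convergent_increments \<beta>"
    and "m2 > 0"
    and "in_Hplus f"
  shows "(\<exists>!g. is_resolvent \<beta> m2 f g) \<and>
         (\<forall>g. is_resolvent \<beta> m2 f g \<longrightarrow>
           Im (hs_inner (Theta f) g) = 0 \<and> Re (hs_inner (Theta f) g) \<ge> 0)"
proof -
  have "HS f"
    using \<open>in_Hplus f\<close> by (simp add: in_Hplus_def)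
  then show ?thesis
    using is_resolvent_exists[OF \<open>HS f\<close> \<open>m2 > 0\<close>] is_resolvent_unique[OF \<open>HS f\<close> \<open>m2 > 0\<close>]
      is_resolvent_Theta_inner_nonneg[OF \<open>in_Hplus f\<close> less_imp_le[OF \<open>m2 > 0\<close>]]
    by blast
qed

end
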